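(* Let $k \geq 1$ and let $T$ and $\widetilde{T}$ be binary phylogenetic $X$-trees with $|X| = n \geq 2k+1$. If $A_k(T) = A_k(\widetilde{T})$, then for any two distinct leaves $x,y\in X$, $[x,y]$ is a cherry of $T$ if and only if $[x,y]$ is a cherry of $\widetilde{T}$.
   Context: A phylogenetic $X$-tree is a tree with no vertices of degree 2 whose leaves are bijectively labelled by (and identified with) $X$; binary means maximum degree 3. Two leaves $x,y$ form a cherry $[x,y]$ if they are adjacent to the same vertex. For a binary character $f: X\to\{a,b\}$, $l(f,T)$ is the minimum, over all maps $g:V(T)\to\{a,b\}$ with $g|_X=f$, of the number of edges $\{u,v\}$ with $g(u)\ne g(v)$; $A_k(T)$ is the set of all binary characters $f$ on $X$ with $l(f,T)=k$. *)

theory Defs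
  imports "HOL-Library.FuncSet"
begin

definition adj :: "'v set set \<Rightarrow> 'v \<Rightarrow> 'v \<Rightarrow> bool" where
  "adj E u v \<longleftrightarrow> {u, v} \<in> E"

definition simple_graph :: "'v set \<Rightarrow> 'v set set \<Rightarrow> bool" where
  "simple_graph V E \<longleftrightarrow> finite V \<and> (\<forall>e\<in>E. \<exists>u v. e = {u, v} \<and> u \<noteq> v \<and> u \<in> V \<and> v \<in> V)"

definition connected_graph :: "'v set \<Rightarrow> 'v set set \<Rightarrow> bool" where
  "connected_graph V E \<longleftrightarrow> (\<forall>u\<in>V. \<forall>v\<in>V. (adj E)\<^sup>*\<^sup>* u v)"

(* acyclic: no edge lies on a cycle, i.e. after deleting any edge {u,v}
   there is no longer a walk from u to v *)
definition acyclic_graph :: "'v set set \<Rightarrow> bool" where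
  "acyclic_graph E \<longleftrightarrow> (\<forall>u v. {u, v} \<in> E \<longrightarrow> \<not> (adj (E - {{u, v}}))\<^sup>*\<^sup>* u v)"

definition is_tree :: "'v set \<Rightarrow> 'v set set \<Rightarrow> bool" where
  "is_tree V E \<longleftrightarrow> simple_graph V E \<and> V \<noteq> {} \<and> connected_graph V E \<and> acyclic_graph E"

definition degree :: "'v set set \<Rightarrow> 'v \<Rightarrow> nat" where
  "degree E v = card {e \<in> E. v \<in> e}"

definition leaves :: "'v set \<Rightarrow> 'v set set \<Rightarrow> 'v set" where
  "leaves V E = {v \<in> V. degree E v \<le> 1}"

definition phylo_tree :: "'x set \<Rightarrow> 'v set \<Rightarrow> 'v set set \<Rightarrow> ('x \<Rightarrow> 'v) \<Rightarrow> bool" where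
  "phylo_tree X V E lab \<longleftrightarrow> finite X \<and> is_tree V E \<and> bij_betw lab X (leaves V E)
     \<and> (\<forall>v\<in>V. degree E v \<noteq> 2)"

definition binary_phylo_tree :: "'x set \<Rightarrow> 'v set \<Rightarrow> 'v set set \<Rightarrow> ('x \<Rightarrow> 'v) \<Rightarrow> bool" where
  "binary_phylo_tree X V E lab \<longleftrightarrow> phylo_tree X V E lab \<and> (\<forall>v\<in>V. degree E v \<le> 3)"

definition cherry :: "'v set \<Rightarrow> 'v set set \<Rightarrow> ('x \<Rightarrow> 'v) \<Rightarrow> 'x \<Rightarrow> 'x \<Rightarrow> bool" where
  "cherry V E lab x y \<longleftrightarrow> (\<exists>w\<in>V. {lab x, w} \<in> E \<and> {lab y, w} \<in> E)"

definition changes :: "'v set set \<Rightarrow> ('v \<Rightarrow> bool) \<Rightarrow> nat" where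
  "changes E g = card {e \<in> E. \<exists>u v. e = {u, v} \<and> g u \<noteq> g v}"

(* parsimony score l(f,T); binary states {a,b} are modelled by bool *)
definition pscore :: "'x set \<Rightarrow> 'v set \<Rightarrow> 'v set set \<Rightarrow> ('x \<Rightarrow> 'v) \<Rightarrow> ('x \<Rightarrow> bool) \<Rightarrow> nat" where
  "pscore X V E lab f = Min {changes E g | g. \<forall>x\<in>X. g (lab x) = f x}"

(* A_k(T): binary characters on X (extensional functions X -> bool) with score k *)
definition Achar :: "nat \<Rightarrow> 'x set \<Rightarrow> 'v set \<Rightarrow> 'v set set \<Rightarrow> ('x \<Rightarrow> 'v) \<Rightarrow> ('x \<Rightarrow> bool) set" where
  "Achar k X V E lab = {f \<in> X \<rightarrow>\<^sub>E (UNIV :: bool set). pscore X V E lab f = k}"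

end

(* Suppose [x,y] is a cherry of T but not of T'. Growing edge-disjoint leaf-to-leaf paths bottom-up
   over the branches of T' (an odd branch passes a spare leaf up to its parent, where two spare
   leaves are joined), one finds at least (n-1)/2 >= k such paths, two of which start at x and y.
   Let f be the character that is b exactly on the start leaves of K = max k 2 of these paths.
   In T' each path needs a change of state and flipping the K start leaves suffices, so
   l(f,T') = K; in T flipping the cherry vertex along with these leaves saves a change, so
   l(f,T) < K. For k >= 2 this puts f in A_k(T') but not in A_k(T); for k = 1 the character is
   not constant (n >= 3), so l(f,T) = 1 while l(f,T') = 2. *)

theory Submission
  imports Defs
begin

lemma div2_pred_add_div2_odd: "odd (a::nat) \<Longrightarrow> (a - 1) div 2 + b div 2 = (a + b - 1) div 2"
  by (elim oddE) (simp add: add.commute)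

lemma div2_add_div2_pred_even: "even (a::nat) \<Longrightarrow> b \<ge> 1 \<Longrightarrow> a div 2 + (b - 1) div 2 = (a + b - 1) div 2"
proof -
  assume "even a" "b \<ge> 1"
  then obtain i j where "a = 2 * i" "b = Suc j" by (metis evenE Suc_le_D One_nat_def)
  thus ?thesis by simp
qed

lemma div2_add_div2_even: "even (a::nat) \<Longrightarrow> even b \<Longrightarrow> a div 2 + b div 2 = (a + b) div 2"
  by (elim evenE) simp

lemma div2_pred_add_div2_pred:
  assumes "\<not> (even (a::nat) \<and> even b)" "a \<ge> 1" "b \<ge> 1"
  shows "(a - 1) div 2 + (b - 1) div 2 + 1 = (a + b) div 2"
proof (cases "even a")
  case True
  then obtain i where i: "a = 2 * i" by (elim evenE)
  have "odd b" using True assms(1) by simp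
  then obtain j where j: "b = 2 * j + 1" by (elim oddE)
  have "i \<ge> 1" using assms(2) i by simp
  then obtain i' where "i = Suc i'" by (metis Suc_le_D One_nat_def)
  thus ?thesis using i j by simp
next
  case False
  then obtain i where i: "a = 2 * i + 1" by (elim oddE)
  show ?thesis
  proof (cases "even b")
    case True
    then obtain j where j: "b = 2 * j" by (elim evenE)
    have "j \<ge> 1" using assms(3) j by simp
    then obtain j' where "j = Suc j'" by (metis Suc_le_D One_nat_def)
    thus ?thesis using i j by simp
  next
    case False
    then obtain j where "b = 2 * j + 1" by (elim oddE)
    thus ?thesis using i by simp
  qed
qed

lemma adj_commute: "adj P a b = adj P b a"
  by (simp add: adj_def insert_commute)

lemma adj_rtranclp_sym: "(adj P)\<^sup>*\<^sup>* a b \<Longrightarrow> (adj P)\<^sup>*\<^sup>* b a"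
proof -
  have "symp (adj P)" by (simp add: symp_def adj_commute)
  hence "symp (adj P)\<^sup>*\<^sup>*" by (rule symp_rtranclp)
  thus "(adj P)\<^sup>*\<^sup>* a b \<Longrightarrow> (adj P)\<^sup>*\<^sup>* b a" by (meson sympD)
qed

lemma adj_rtranclp_mono: "P \<subseteq> Q \<Longrightarrow> (adj P)\<^sup>*\<^sup>* a b \<Longrightarrow> (adj Q)\<^sup>*\<^sup>* a b"
  by (erule rtranclp_mono[THEN predicate2D, rotated]) (auto simp: adj_def)

lemma adj_rtranclp_edge_at_start: "(adj P)\<^sup>*\<^sup>* a b \<Longrightarrow> a \<noteq> b \<Longrightarrow> \<exists>c. {a,c} \<in> P"
  by (erule converse_rtranclpE) (auto simp: adj_def)

lemma adj_rtranclp_edge_changes: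
  "(adj P)\<^sup>*\<^sup>* a b \<Longrightarrow> g a \<noteq> g b \<Longrightarrow> \<exists>c d. {c,d} \<in> P \<and> g c \<noteq> g d"
proof (induction rule: rtranclp_induct)
  case base thus ?case by simp
next
  case (step b c)
  show ?case
  proof (cases "g a = g b")
    case True
    with step have "g b \<noteq> g c" by simp
    with step(2) show ?thesis by (auto simp: adj_def)
  next
    case False thus ?thesis using step by blast
  qed
qed

lemma changes_le_card: "finite E \<Longrightarrow> changes E g \<le> card E"
  unfolding changes_def by (intro card_mono) auto

lemma finite_changes_extensions: "finite E \<Longrightarrow> finite {changes E g | g. P g}"
proof -
  assume "finite E"
  hence "{changes E g | g. P g} \<subseteq> {..card E}" using changes_le_card by auto
  thus ?thesis using finite_subset by blast
qed

lemma pscore_le_changes: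
  assumes "finite E" "\<forall>z\<in>X. g (lab z) = f z" shows "pscore X V E lab f \<le> changes E g"
proof -
  let ?S = "{changes E g | g. \<forall>x\<in>X. g (lab x) = f x}"
  have "finite ?S" by (rule finite_changes_extensions[OF assms(1)])
  moreover have "changes E g \<in> ?S" using assms(2) by blast
  ultimately show ?thesis unfolding pscore_def by (rule Min_le)
qed

lemma pscore_geI:
  assumes "finite E" "inj_on lab X" "\<And>g. \<forall>z\<in>X. g (lab z) = f z \<Longrightarrow> c \<le> changes E g"
  shows "c \<le> pscore X V E lab f"
proof -
  let ?S = "{changes E g | g. \<forall>x\<in>X. g (lab x) = f x}"
  define g0 where "g0 = (\<lambda>v. f (inv_into X lab v))"
  have "\<forall>z\<in>X. g0 (lab z) = f z" using assms(2) unfolding g0_def by simp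
  hence "changes E g0 \<in> ?S" by (intro CollectI exI[of _ g0]) simp
  hence nonempty: "?S \<noteq> {}" by auto
  have "\<forall>a\<in>?S. c \<le> a"
  proof
    fix a assume "a \<in> ?S"
    then obtain g where "a = changes E g" "\<forall>x\<in>X. g (lab x) = f x" by blast
    thus "c \<le> a" using assms(3) by simp
  qed
  thus ?thesis
    unfolding pscore_def using Min_ge_iff[OF finite_changes_extensions[OF assms(1)] nonempty] by blast
qed

section \<open>Branches of a binary tree\<close>

locale binary_tree =
  fixes V :: "'v set" and E :: "'v set set"
  assumes tree: "is_tree V E"
    and degree_ne_2: "\<forall>v\<in>V. degree E v \<noteq> 2"
    and degree_le_3: "\<forall>v\<in>V. degree E v \<le> 3"
begin

lemma finite_V: "finite V"
  using tree by (simp add: is_tree_def simple_graph_def)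

lemma edge_doubleton: "e \<in> E \<Longrightarrow> \<exists>u v. e = {u,v} \<and> u \<noteq> v \<and> u \<in> V \<and> v \<in> V"
  using tree by (simp add: is_tree_def simple_graph_def)

lemma finite_E: "finite E"
proof -
  have "E \<subseteq> Pow V" using edge_doubleton by blast
  thus ?thesis using finite_V by (simp add: finite_subset)
qed

lemma edgeD: assumes "{u,v} \<in> E" shows "u \<in> V" "v \<in> V" "u \<noteq> v"
proof -
  obtain a b where "{u,v} = {a,b}" "a \<noteq> b" "a \<in> V" "b \<in> V" using edge_doubleton assms by blast
  thus "u \<in> V" "v \<in> V" "u \<noteq> v" by (auto simp: doubleton_eq_iff)
qed

lemma edge_at: assumes "e \<in> E" "v \<in> e" shows "\<exists>z. e = {v,z}"
  using edge_doubleton[OF assms(1)] assms(2) by (auto simp: insert_commute)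

lemma connected: "u \<in> V \<Longrightarrow> v \<in> V \<Longrightarrow> (adj E)\<^sup>*\<^sup>* u v"
  using tree by (simp add: is_tree_def connected_graph_def)

lemma edge_not_on_cycle: "{u,v} \<in> E \<Longrightarrow> \<not> (adj (E - {{u,v}}))\<^sup>*\<^sup>* u v"
  using tree by (simp add: is_tree_def acyclic_graph_def)

lemma finite_incident: "finite {e \<in> E. v \<in> e}"
  using finite_E by simp

lemma card_incident_leaf: "z \<in> leaves V E \<Longrightarrow> card {e \<in> E. z \<in> e} \<le> 1"
  by (simp add: leaves_def degree_def)

lemma leaf_edge_unique:
  assumes "z \<in> leaves V E" "e1 \<in> E" "e2 \<in> E" "z \<in> e1" "z \<in> e2" shows "e1 = e2"
  using assms card_incident_leaf[of z] finite_incident[of z]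
    card_le_Suc0_iff_eq[of "{e \<in> E. z \<in> e}"] by auto

lemma degree_inner: "v \<in> V \<Longrightarrow> v \<notin> leaves V E \<Longrightarrow> degree E v = 3"
  using degree_ne_2 degree_le_3 by (force simp: leaves_def)

definition branch :: "'v \<Rightarrow> 'v \<Rightarrow> 'v set" where
  "branch u v = {z. (adj (E - {{u,v}}))\<^sup>*\<^sup>* v z}"

lemma branch_root: "v \<in> branch u v"
  by (simp add: branch_def)

lemma tail_notin_branch: "{u,v} \<in> E \<Longrightarrow> u \<notin> branch u v"
  using edge_not_on_cycle[of v u] adj_rtranclp_sym by (auto simp: branch_def insert_commute)

lemma branch_subset_V: assumes "{u,v} \<in> E" shows "branch u v \<subseteq> V"
proof
  fix z assume "z \<in> branch u v"
  hence "(adj (E - {{u,v}}))\<^sup>*\<^sup>* v z" by (simp add: branch_def)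
  thus "z \<in> V"
  proof (induction rule: rtranclp_induct)
    case base thus ?case using edgeD assms by auto
  next
    case (step a b) thus ?case using edgeD[of a b] by (auto simp: adj_def)
  qed
qed

lemma finite_branch: "{u,v} \<in> E \<Longrightarrow> finite (branch u v)"
  using branch_subset_V finite_V finite_subset by blast

lemma branch_closed:
  assumes "z \<in> branch u v" "{z,z'} \<in> E" "{z,z'} \<noteq> {u,v}" shows "z' \<in> branch u v"
proof -
  have "adj (E - {{u,v}}) z z'" using assms(2,3) by (simp add: adj_def)
  thus ?thesis using assms(1) unfolding branch_def by (blast intro: rtranclp.rtrancl_into_rtrancl)
qed

lemma V_eq_branch_Un: assumes "{u,v} \<in> E" shows "V = branch u v \<union> branch v u"
proof
  show "branch u v \<union> branch v u \<subseteq> V"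
    using branch_subset_V assms by (auto simp: insert_commute)
next
  show "V \<subseteq> branch u v \<union> branch v u"
  proof
    fix z assume "z \<in> V"
    have "(adj E)\<^sup>*\<^sup>* v z" using connected edgeD(2)[OF assms] \<open>z \<in> V\<close> by blast
    thus "z \<in> branch u v \<union> branch v u"
    proof (induction rule: rtranclp_induct)
      case base thus ?case by (simp add: branch_root)
    next
      case (step a b)
      have e: "{a,b} \<in> E" using step(2) by (simp add: adj_def)
      show ?case
      proof (cases "{a,b} = {u,v}")
        case True
        thus ?thesis using branch_root[of u v] branch_root[of v u] by (auto simp: doubleton_eq_iff)
      next
        case False
        hence "{a,b} \<noteq> {v,u}" by (auto simp: insert_commute)
        thus ?thesis using False branch_closed[OF _ e] step(3) by blast
      qed
    qed
  qed
qed

lemma branch_leaf: assumes "{u,v} \<in> E" "v \<in> leaves V E" shows "branch u v = {v}"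
proof -
  have "(adj (E - {{u,v}}))\<^sup>*\<^sup>* v z \<Longrightarrow> z = v" for z
  proof (induction rule: rtranclp_induct)
    case base thus ?case by simp
  next
    case (step a b)
    hence "{v,b} \<in> E" "{v,b} \<noteq> {u,v}" by (auto simp: adj_def)
    thus ?case using leaf_edge_unique[OF assms(2) \<open>{v,b} \<in> E\<close> assms(1)] by simp
  qed
  thus ?thesis using branch_root by (auto simp: branch_def)
qed

lemma branch_step: "a \<in> branch v w \<Longrightarrow> {a,b} \<in> E \<Longrightarrow> b \<in> insert v (branch v w)"
  using branch_closed[of a v w b] branch_root[of w v] by (cases "{a,b} = {v,w}") (auto simp: doubleton_eq_iff)

lemma branch_walk_avoiding:
  assumes "{v,w} \<in> E" "z \<in> branch v w" shows "(adj {e \<in> E. v \<notin> e})\<^sup>*\<^sup>* w z"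
proof -
  have "(adj (E - {{v,w}}))\<^sup>*\<^sup>* w z" using assms(2) by (simp add: branch_def)
  thus ?thesis
  proof (induction rule: rtranclp_induct)
    case base thus ?case by simp
  next
    case (step a b)
    have "a \<in> branch v w" "b \<in> branch v w"
      using step(1,2) by (simp_all add: branch_def rtranclp.rtrancl_into_rtrancl)
    hence "v \<noteq> a" "v \<noteq> b" using tail_notin_branch[OF assms(1)] by auto
    hence "adj {e \<in> E. v \<notin> e} a b" using step(2) by (auto simp: adj_def)
    thus ?case using step(3) by (rule rtranclp.rtrancl_into_rtrancl[rotated])
  qed
qed

lemma branch_subset_branch:
  assumes "{u,v} \<in> E" "{v,w} \<in> E" "w \<noteq> u" shows "branch v w \<subseteq> branch u v"
proof
  fix z assume "z \<in> branch v w"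
  hence "(adj {e \<in> E. v \<notin> e})\<^sup>*\<^sup>* w z" using branch_walk_avoiding assms(2) by simp
  hence walk: "(adj (E - {{u,v}}))\<^sup>*\<^sup>* w z" by (rule adj_rtranclp_mono[rotated]) auto
  have "{v,w} \<noteq> {u,v}" using assms edgeD[OF assms(2)] by (auto simp: doubleton_eq_iff)
  hence "adj (E - {{u,v}}) v w" using assms(2) by (simp add: adj_def)
  hence "(adj (E - {{u,v}}))\<^sup>*\<^sup>* v z" using walk by (rule converse_rtranclp_into_rtranclp)
  thus "z \<in> branch u v" by (simp add: branch_def)
qed

lemma branch_disjoint:
  assumes "{v,w1} \<in> E" "{v,w2} \<in> E" "w1 \<noteq> w2" shows "branch v w1 \<inter> branch v w2 = {}"
proof (rule ccontr)
  assume "branch v w1 \<inter> branch v w2 \<noteq> {}"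
  then obtain z where "z \<in> branch v w1" "z \<in> branch v w2" by blast
  hence "(adj {e \<in> E. v \<notin> e})\<^sup>*\<^sup>* w1 z" "(adj {e \<in> E. v \<notin> e})\<^sup>*\<^sup>* w2 z"
    using branch_walk_avoiding assms by auto
  hence "(adj {e \<in> E. v \<notin> e})\<^sup>*\<^sup>* w1 w2" using adj_rtranclp_sym by (meson rtranclp_trans)
  hence walk: "(adj (E - {{v,w2}}))\<^sup>*\<^sup>* w1 w2" by (rule adj_rtranclp_mono[rotated]) auto
  have "{v,w1} \<noteq> {v,w2}" using assms(3) by (auto simp: doubleton_eq_iff)
  hence "adj (E - {{v,w2}}) v w1" using assms(1) by (simp add: adj_def)
  hence "(adj (E - {{v,w2}}))\<^sup>*\<^sup>* v w2" using walk by (rule converse_rtranclp_into_rtranclp)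
  thus False using edge_not_on_cycle[OF assms(2)] by simp
qed

definition fork :: "'v \<Rightarrow> 'v \<Rightarrow> 'v \<Rightarrow> 'v \<Rightarrow> bool" where
  "fork u v w1 w2 \<longleftrightarrow> {u,v} \<in> E \<and> {v,w1} \<in> E \<and> {v,w2} \<in> E \<and> w1 \<noteq> w2 \<and> w1 \<noteq> u \<and> w2 \<noteq> u \<and>
     (\<forall>e\<in>E. v \<in> e \<longrightarrow> e = {v,u} \<or> e = {v,w1} \<or> e = {v,w2})"

lemma fork_swap: "fork u v w1 w2 \<Longrightarrow> fork u v w2 w1"
  unfolding fork_def by blast

lemma fork_edges: "fork u v w1 w2 \<Longrightarrow> {u,v} \<in> E \<and> {v,w1} \<in> E \<and> {v,w2} \<in> E"
  unfolding fork_def by blast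

lemma fork_exists:
  assumes "{u,v} \<in> E" "v \<notin> leaves V E" shows "\<exists>w1 w2. fork u v w1 w2"
proof -
  let ?I = "{e \<in> E. v \<in> e}"
  have "card ?I = 3"
    using degree_inner[OF edgeD(2)[OF assms(1)] assms(2)] by (simp add: degree_def)
  moreover have "{v,u} \<in> ?I" using assms(1) by (simp add: insert_commute)
  ultimately have "card (?I - {{v,u}}) = 2" using finite_incident by (simp add: card_Diff_singleton)
  then obtain e1 e2 where N: "?I - {{v,u}} = {e1,e2}" "e1 \<noteq> e2" by (meson card_2_iff)
  have e1: "e1 \<in> E" "v \<in> e1" "e1 \<noteq> {v,u}" and e2: "e2 \<in> E" "v \<in> e2" "e2 \<noteq> {v,u}"
    using N by auto
  obtain w1 w2 where w: "e1 = {v,w1}" "e2 = {v,w2}" using edge_at e1 e2 by metis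
  have "fork u v w1 w2" unfolding fork_def
  proof (intro conjI ballI impI)
    show "{u,v} \<in> E" "{v,w1} \<in> E" "{v,w2} \<in> E" using assms(1) e1 e2 w by auto
    show "w1 \<noteq> w2" "w1 \<noteq> u" "w2 \<noteq> u" using N(2) e1 e2 w by auto
    fix e assume "e \<in> E" "v \<in> e"
    hence "e \<in> insert {v,u} (?I - {{v,u}})" by auto
    thus "e = {v,u} \<or> e = {v,w1} \<or> e = {v,w2}" using N w by auto
  qed
  thus ?thesis by blast
qed

lemma branch_fork:
  assumes "fork u v w1 w2"
  shows "branch u v = insert v (branch v w1 \<union> branch v w2)"
proof
  have "(adj (E - {{u,v}}))\<^sup>*\<^sup>* v z \<Longrightarrow> z \<in> insert v (branch v w1 \<union> branch v w2)" for z
  proof (induction rule: rtranclp_induct)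
    case base thus ?case by simp
  next
    case (step a b)
    have e: "{a,b} \<in> E" "{a,b} \<noteq> {u,v}" using step(2) by (auto simp: adj_def)
    show ?case
    proof (cases "a = v")
      case True
      moreover have "{v,u} = {u,v}" by (rule insert_commute)
      ultimately have "{v,b} = {v,w1} \<or> {v,b} = {v,w2}"
        using assms e unfolding fork_def by (metis insertI1)
      hence "b = w1 \<or> b = w2" by (metis doubleton_eq_iff)
      thus ?thesis using branch_root[of w1 v] branch_root[of w2 v] by blast
    next
      case False
      thus ?thesis using step(3) branch_step[OF _ e(1)] by blast
    qed
  qed
  thus "branch u v \<subseteq> insert v (branch v w1 \<union> branch v w2)" by (auto simp: branch_def)
  show "insert v (branch v w1 \<union> branch v w2) \<subseteq> branch u v"
    using assms branch_subset_branch branch_root[of v u] by (auto simp: fork_def)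
qed

lemma branch_fork_disjoint: "fork u v w1 w2 \<Longrightarrow> branch v w1 \<inter> branch v w2 = {}"
  using branch_disjoint by (simp add: fork_def)

lemma card_branch_fork_less: assumes "fork u v w1 w2" shows "card (branch v w1) < card (branch u v)"
proof -
  have "v \<notin> branch v w1" using tail_notin_branch fork_edges[OF assms] by blast
  hence "branch v w1 \<subset> branch u v" using branch_fork[OF assms] branch_root by blast
  thus ?thesis using finite_branch fork_edges[OF assms] psubset_card_mono by blast
qed

definition branch_leaves :: "'v \<Rightarrow> 'v \<Rightarrow> 'v set" where
  "branch_leaves u v = branch u v \<inter> leaves V E"

definition branch_edges :: "'v \<Rightarrow> 'v \<Rightarrow> 'v set set" where
  "branch_edges u v = {e \<in> E. e \<subseteq> branch u v}"

lemma branch_leaves_subset: "branch_leaves u v \<subseteq> leaves V E"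
  unfolding branch_leaves_def by blast

lemma branch_edges_subset: "branch_edges u v \<subseteq> E"
  unfolding branch_edges_def by blast

lemma finite_branch_leaves: "{u,v} \<in> E \<Longrightarrow> finite (branch_leaves u v)"
  unfolding branch_leaves_def using finite_branch by blast

lemma branch_leaves_leaf: "{u,v} \<in> E \<Longrightarrow> v \<in> leaves V E \<Longrightarrow> branch_leaves u v = {v}"
  using branch_leaf unfolding branch_leaves_def by auto

lemma branch_leaves_fork:
  assumes "fork u v w1 w2" "v \<notin> leaves V E"
  shows "branch_leaves u v = branch_leaves v w1 \<union> branch_leaves v w2"
    and "branch_leaves v w1 \<inter> branch_leaves v w2 = {}"
    and "card (branch_leaves u v) = card (branch_leaves v w1) + card (branch_leaves v w2)"
proof -
  show union: "branch_leaves u v = branch_leaves v w1 \<union> branch_leaves v w2"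
    using branch_fork[OF assms(1)] assms(2) unfolding branch_leaves_def by auto
  show disj: "branch_leaves v w1 \<inter> branch_leaves v w2 = {}"
    using branch_fork_disjoint[OF assms(1)] unfolding branch_leaves_def by blast
  have "finite (branch_leaves v w1)" "finite (branch_leaves v w2)"
    using finite_branch_leaves fork_edges[OF assms(1)] by auto
  thus "card (branch_leaves u v) = card (branch_leaves v w1) + card (branch_leaves v w2)"
    using union disj by (simp add: card_Un_disjoint)
qed

lemma branch_edges_fork:
  assumes "fork u v w1 w2"
  shows "branch_edges v w1 \<subseteq> branch_edges u v" "branch_edges v w2 \<subseteq> branch_edges u v"
    and "{v,w1} \<in> branch_edges u v" "{v,w2} \<in> branch_edges u v"
    and "{v,w1} \<notin> branch_edges v w1" "{v,w1} \<notin> branch_edges v w2"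
    and "{v,w2} \<notin> branch_edges v w1" "{v,w2} \<notin> branch_edges v w2"
    and "branch_edges v w1 \<inter> branch_edges v w2 = {}"
proof -
  note fork = branch_fork[OF assms] and edges = fork_edges[OF assms]
  have tails: "v \<notin> branch v w1" "v \<notin> branch v w2" using tail_notin_branch edges by auto
  show "branch_edges v w1 \<subseteq> branch_edges u v" "branch_edges v w2 \<subseteq> branch_edges u v"
    using fork unfolding branch_edges_def by auto
  show "{v,w1} \<in> branch_edges u v" "{v,w2} \<in> branch_edges u v"
    using fork edges branch_root[of w1 v] branch_root[of w2 v] unfolding branch_edges_def by auto
  show "{v,w1} \<notin> branch_edges v w1" "{v,w1} \<notin> branch_edges v w2"
    "{v,w2} \<notin> branch_edges v w1" "{v,w2} \<notin> branch_edges v w2"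
    using tails unfolding branch_edges_def by auto
  show "branch_edges v w1 \<inter> branch_edges v w2 = {}"
  proof (rule ccontr)
    assume "branch_edges v w1 \<inter> branch_edges v w2 \<noteq> {}"
    then obtain e where e: "e \<in> E" "e \<subseteq> branch v w1" "e \<subseteq> branch v w2"
      unfolding branch_edges_def by blast
    obtain a b where "e = {a,b}" using edge_doubleton[OF e(1)] by blast
    thus False using e branch_fork_disjoint[OF assms] by auto
  qed
qed

lemma branch_leaves_nonempty: "{u,v} \<in> E \<Longrightarrow> branch_leaves u v \<noteq> {}"
proof (induction "card (branch u v)" arbitrary: u v rule: less_induct)
  case less
  show ?case
  proof (cases "v \<in> leaves V E")
    case True thus ?thesis using branch_root[of v u] unfolding branch_leaves_def by blast
  next
    case False
    then obtain w1 w2 where fork: "fork u v w1 w2" using fork_exists less(2) by blast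
    have "branch_leaves v w1 \<noteq> {}"
      using less(1)[OF card_branch_fork_less[OF fork]] fork_edges[OF fork] by blast
    thus ?thesis using branch_leaves_fork(1)[OF fork False] by blast
  qed
qed

lemma card_branch_leaves_pos: "{u,v} \<in> E \<Longrightarrow> card (branch_leaves u v) \<ge> 1"
  using branch_leaves_nonempty finite_branch_leaves by (simp add: Suc_leI card_gt_0_iff)

section \<open>Packings of edge-disjoint leaf paths\<close>

abbreviation path_src :: "'v \<times> 'v \<times> 'v set set \<Rightarrow> 'v" where
  "path_src p \<equiv> fst p"

abbreviation path_tgt :: "'v \<times> 'v \<times> 'v set set \<Rightarrow> 'v" where
  "path_tgt p \<equiv> fst (snd p)"

abbreviation path_edges :: "'v \<times> 'v \<times> 'v set set \<Rightarrow> 'v set set" where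
  "path_edges p \<equiv> snd (snd p)"

definition leaf_path :: "'v set set \<Rightarrow> 'v \<times> 'v \<times> 'v set set \<Rightarrow> bool" where
  "leaf_path F p \<longleftrightarrow> path_src p \<in> leaves V E \<and> path_tgt p \<in> leaves V E \<and> path_src p \<noteq> path_tgt p
     \<and> path_edges p \<subseteq> F \<and> (adj (path_edges p))\<^sup>*\<^sup>* (path_src p) (path_tgt p)"

definition leaf_packing :: "'v set set \<Rightarrow> ('v \<times> 'v \<times> 'v set set) list \<Rightarrow> bool" where
  "leaf_packing F ps \<longleftrightarrow> (\<forall>p\<in>set ps. leaf_path F p)
     \<and> sorted_wrt (\<lambda>p q. path_edges p \<inter> path_edges q = {}) ps"

lemma leaf_packing_Nil [simp]: "leaf_packing F []"
  by (simp add: leaf_packing_def)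

lemma leaf_packing_Cons:
  "leaf_packing F (p # ps) \<longleftrightarrow>
     leaf_path F p \<and> leaf_packing F ps \<and> (\<forall>q\<in>set ps. path_edges p \<inter> path_edges q = {})"
  by (auto simp: leaf_packing_def)

lemma leaf_packing_append:
  "leaf_packing F (xs @ ys) \<longleftrightarrow> leaf_packing F xs \<and> leaf_packing F ys
     \<and> (\<forall>p\<in>set xs. \<forall>q\<in>set ys. path_edges p \<inter> path_edges q = {})"
  by (auto simp: leaf_packing_def sorted_wrt_append)

lemma leaf_packing_edges: "leaf_packing F ps \<Longrightarrow> p \<in> set ps \<Longrightarrow> path_edges p \<subseteq> F"
  by (simp add: leaf_packing_def leaf_path_def)

lemma leaf_packing_ends:
  "leaf_packing F ps \<Longrightarrow> p \<in> set ps \<Longrightarrow> path_src p \<in> leaves V E \<and> path_tgt p \<in> leaves V E"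
  by (simp add: leaf_packing_def leaf_path_def)

lemma leaf_packing_mono: "F \<subseteq> G \<Longrightarrow> leaf_packing F ps \<Longrightarrow> leaf_packing G ps"
  by (auto simp: leaf_packing_def leaf_path_def)

lemma leaf_packing_take: "leaf_packing F ps \<Longrightarrow> leaf_packing F (take n ps)"
  by (auto simp: leaf_packing_def sorted_wrt_take dest: in_set_takeD)

lemma leaf_packing_fork_append:
  assumes "fork u v w1 w2" "leaf_packing (branch_edges v w1) xs" "leaf_packing (branch_edges v w2) ys"
  shows "leaf_packing (branch_edges u v) (xs @ ys)"
proof -
  note sub = branch_edges_fork[OF assms(1)]
  have "leaf_packing (branch_edges u v) xs" "leaf_packing (branch_edges u v) ys"
    using leaf_packing_mono sub(1,2) assms(2,3) by blast+
  moreover have "\<forall>p\<in>set xs. \<forall>q\<in>set ys. path_edges p \<inter> path_edges q = {}"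
    using leaf_packing_edges[OF assms(2)] leaf_packing_edges[OF assms(3)] sub(9) by blast
  ultimately show ?thesis by (simp add: leaf_packing_append)
qed

lemma leaf_path_endpoint_edge:
  assumes "leaf_path F p" "z = path_src p \<or> z = path_tgt p" shows "\<exists>e\<in>path_edges p. z \<in> e"
proof -
  have walk: "(adj (path_edges p))\<^sup>*\<^sup>* (path_src p) (path_tgt p)" and ne: "path_src p \<noteq> path_tgt p"
    using assms(1) by (auto simp: leaf_path_def)
  show ?thesis
    using adj_rtranclp_edge_at_start[OF walk ne] adj_rtranclp_edge_at_start[OF adj_rtranclp_sym[OF walk] ne[symmetric]]
      assms(2) by blast
qed

lemma leaf_paths_disjoint_endpoints:
  assumes "leaf_path E p" "leaf_path E q" "path_edges p \<inter> path_edges q = {}"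
    and "z = path_src p \<or> z = path_tgt p" "z = path_src q \<or> z = path_tgt q"
  shows False
proof -
  obtain e1 where e1: "e1 \<in> path_edges p" "z \<in> e1" using leaf_path_endpoint_edge[OF assms(1,4)] by blast
  obtain e2 where e2: "e2 \<in> path_edges q" "z \<in> e2" using leaf_path_endpoint_edge[OF assms(2,5)] by blast
  have "z \<in> leaves V E" using assms(1,4) by (auto simp: leaf_path_def)
  moreover have "e1 \<in> E" "e2 \<in> E" using e1 e2 assms(1,2) by (auto simp: leaf_path_def)
  ultimately have "e1 = e2" using leaf_edge_unique e1(2) e2(2) by blast
  thus False using e1 e2 assms(3) by blast
qed

lemma leaf_packing_sources:
  assumes "leaf_packing E ps"
  shows "distinct (map path_src ps)" and "p \<in> set ps \<Longrightarrow> path_tgt p \<notin> path_src ` set ps"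
proof -
  have sorted: "sorted_wrt (\<lambda>p q. path_edges p \<inter> path_edges q = {}) ps"
    using assms by (simp add: leaf_packing_def)
  have path: "leaf_path E (ps!i)" if "i < length ps" for i
    using that assms nth_mem unfolding leaf_packing_def by blast
  have disj: "path_edges (ps!i) \<inter> path_edges (ps!j) = {}"
    if "i < length ps" "j < length ps" "i \<noteq> j" for i j
  proof (cases "i < j")
    case True thus ?thesis using sorted_wrt_nth_less[OF sorted True that(2)] by simp
  next
    case False
    hence "j < i" using that(3) by simp
    from sorted_wrt_nth_less[OF sorted this that(1)] show ?thesis by (simp add: Int_commute)
  qed
  have src_unshared: "path_src (ps!i) \<noteq> path_src (ps!j) \<and> path_src (ps!i) \<noteq> path_tgt (ps!j)"
    if "i < length ps" "j < length ps" "i \<noteq> j" for i j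
    using leaf_paths_disjoint_endpoints[OF path[OF that(1)] path[OF that(2)] disj[OF that],
        where z = "path_src (ps!i)"] by auto
  show "distinct (map path_src ps)"
    unfolding distinct_conv_nth using src_unshared by simp
  show "path_tgt p \<notin> path_src ` set ps" if p: "p \<in> set ps"
  proof
    assume "path_tgt p \<in> path_src ` set ps"
    then obtain q where q: "q \<in> set ps" "path_tgt p = path_src q" by blast
    obtain i where i: "i < length ps" "q = ps!i" using q(1) by (auto simp: in_set_conv_nth)
    obtain j where j: "j < length ps" "p = ps!j" using p by (auto simp: in_set_conv_nth)
    have "path_tgt (ps!j) \<noteq> path_src (ps!j)" using path[OF j(1)] by (auto simp: leaf_path_def)
    thus False using src_unshared[OF i(1) j(1)] q(2) i(2) j(2) by (cases "i = j") auto
  qed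
qed

text \<open>Besides its \<open>(m - 1) div 2\<close> paths, a stubbed packing of a branch with \<open>m\<close> leaves has a stub:
  edges joining an unused leaf \<open>l\<close> to the root \<open>v\<close>, which the parent extends to a further path.\<close>

definition stubbed_packing :: "'v \<Rightarrow> 'v \<Rightarrow> 'v \<Rightarrow> bool" where
  "stubbed_packing u v y \<longleftrightarrow> (\<exists>ps l P. leaf_packing (branch_edges u v) ps
     \<and> length ps = (card (branch_leaves u v) - 1) div 2
     \<and> P \<subseteq> branch_edges u v \<and> (adj P)\<^sup>*\<^sup>* l v \<and> l \<in> branch_leaves u v
     \<and> (\<forall>p\<in>set ps. P \<inter> path_edges p = {}) \<and> (l = y \<or> ps \<noteq> [] \<and> path_src (hd ps) = y))"

definition rooted_packing :: "'v \<Rightarrow> 'v \<Rightarrow> 'v \<Rightarrow> bool" where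
  "rooted_packing u v y \<longleftrightarrow> (\<exists>ps. leaf_packing (branch_edges u v) ps
     \<and> length ps = card (branch_leaves u v) div 2 \<and> ps \<noteq> [] \<and> path_src (hd ps) = y)"

lemma stub_through_fork:
  assumes fork: "fork u v w1 w2" and P: "P \<subseteq> branch_edges v w1" and walk: "(adj P)\<^sup>*\<^sup>* l w1"
  shows "insert {v,w1} P \<subseteq> branch_edges u v"
    and "(adj (insert {v,w1} P))\<^sup>*\<^sup>* l v"
    and "Q \<subseteq> branch_edges v w1 \<Longrightarrow> P \<inter> Q = {} \<Longrightarrow> insert {v,w1} P \<inter> Q = {}"
    and "Q \<subseteq> branch_edges v w2 \<Longrightarrow> insert {v,w1} P \<inter> Q = {}"
proof -
  note sub = branch_edges_fork[OF fork]
  show "insert {v,w1} P \<subseteq> branch_edges u v" using P sub(1,3) by (simp add: order_trans)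
  have "(adj (insert {v,w1} P))\<^sup>*\<^sup>* l w1" by (rule adj_rtranclp_mono[OF subset_insertI walk])
  moreover have "adj (insert {v,w1} P) w1 v" by (simp add: adj_def doubleton_eq_iff)
  ultimately show "(adj (insert {v,w1} P))\<^sup>*\<^sup>* l v" by (rule rtranclp.rtrancl_into_rtrancl)
  show "Q \<subseteq> branch_edges v w1 \<Longrightarrow> P \<inter> Q = {} \<Longrightarrow> insert {v,w1} P \<inter> Q = {}"
    using sub(5) by blast
  show "Q \<subseteq> branch_edges v w2 \<Longrightarrow> insert {v,w1} P \<inter> Q = {}"
    using P sub(6,9) by blast
qed

lemma stubbed_packing_fork:
  assumes fork: "fork u v w1 w2" and nl: "v \<notin> leaves V E"
    and stub1: "stubbed_packing v w1 y"
    and rooted1: "even (card (branch_leaves v w1)) \<Longrightarrow> rooted_packing v w1 y"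
    and stub2: "stubbed_packing v w2 y2"
    and half2: "leaf_packing (branch_edges v w2) qs2" "length qs2 = card (branch_leaves v w2) div 2"
  shows "stubbed_packing u v y"
proof -
  define m1 where "m1 = card (branch_leaves v w1)"
  define m2 where "m2 = card (branch_leaves v w2)"
  have m: "card (branch_leaves u v) = m1 + m2"
    using branch_leaves_fork(3)[OF fork nl] unfolding m1_def m2_def .
  have m2_pos: "m2 \<ge> 1" unfolding m2_def using card_branch_leaves_pos fork_edges[OF fork] by blast
  have leaves_sub: "branch_leaves v w1 \<subseteq> branch_leaves u v" "branch_leaves v w2 \<subseteq> branch_leaves u v"
    using branch_leaves_fork(1)[OF fork nl] by blast+
  show ?thesis
  proof (cases "even m1")
    case False
    obtain ps1 l1 P1 where S1: "leaf_packing (branch_edges v w1) ps1" "length ps1 = (m1 - 1) div 2"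
      "P1 \<subseteq> branch_edges v w1" "(adj P1)\<^sup>*\<^sup>* l1 w1" "l1 \<in> branch_leaves v w1"
      "\<forall>p\<in>set ps1. P1 \<inter> path_edges p = {}" "l1 = y \<or> ps1 \<noteq> [] \<and> path_src (hd ps1) = y"
      using stub1 unfolding stubbed_packing_def m1_def by blast
    note stub = stub_through_fork[OF fork S1(3,4)]
    have "leaf_packing (branch_edges u v) (ps1 @ qs2)"
      by (rule leaf_packing_fork_append[OF fork S1(1) half2(1)])
    moreover have "length (ps1 @ qs2) = (card (branch_leaves u v) - 1) div 2"
      using S1(2) half2(2) m div2_pred_add_div2_odd[OF False] unfolding m2_def by simp
    moreover have "insert {v,w1} P1 \<inter> path_edges p = {}" if "p \<in> set (ps1 @ qs2)" for p
    proof (cases "p \<in> set ps1")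
      case True thus ?thesis using stub(3)[OF leaf_packing_edges[OF S1(1) True]] S1(6) by blast
    next
      case False thus ?thesis using that stub(4)[OF leaf_packing_edges[OF half2(1)]] by simp
    qed
    moreover have "l1 = y \<or> ps1 @ qs2 \<noteq> [] \<and> path_src (hd (ps1 @ qs2)) = y" using S1(7) by auto
    ultimately show ?thesis
      unfolding stubbed_packing_def using stub(1,2) S1(5) leaves_sub(1) by blast
  next
    case True
    obtain qs1 where R1: "leaf_packing (branch_edges v w1) qs1" "length qs1 = m1 div 2"
      "qs1 \<noteq> []" "path_src (hd qs1) = y"
      using rooted1 True unfolding rooted_packing_def m1_def by blast
    obtain ps2 l2 P2 where S2: "leaf_packing (branch_edges v w2) ps2" "length ps2 = (m2 - 1) div 2"
      "P2 \<subseteq> branch_edges v w2" "(adj P2)\<^sup>*\<^sup>* l2 w2" "l2 \<in> branch_leaves v w2"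
      "\<forall>p\<in>set ps2. P2 \<inter> path_edges p = {}"
      using stub2 unfolding stubbed_packing_def m2_def by blast
    note stub = stub_through_fork[OF fork_swap[OF fork] S2(3,4)]
    have "leaf_packing (branch_edges u v) (qs1 @ ps2)"
      by (rule leaf_packing_fork_append[OF fork R1(1) S2(1)])
    moreover have "length (qs1 @ ps2) = (card (branch_leaves u v) - 1) div 2"
      using R1(2) S2(2) m div2_add_div2_pred_even[OF True m2_pos] by simp
    moreover have "insert {v,w2} P2 \<inter> path_edges p = {}" if "p \<in> set (qs1 @ ps2)" for p
    proof (cases "p \<in> set ps2")
      case True thus ?thesis using stub(3)[OF leaf_packing_edges[OF S2(1) True]] S2(6) by blast
    next
      case False thus ?thesis using that stub(4)[OF leaf_packing_edges[OF R1(1)]] by simp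
    qed
    moreover have "qs1 @ ps2 \<noteq> [] \<and> path_src (hd (qs1 @ ps2)) = y" using R1(3,4) by simp
    ultimately show ?thesis
      unfolding stubbed_packing_def using stub(1,2) S2(5) leaves_sub(2) by blast
  qed
qed

lemma leaf_path_joining_stubs:
  assumes fork: "fork u v w1 w2" and nl: "v \<notin> leaves V E"
    and P1: "P1 \<subseteq> branch_edges v w1" "(adj P1)\<^sup>*\<^sup>* l1 w1" "l1 \<in> branch_leaves v w1"
    and P2: "P2 \<subseteq> branch_edges v w2" "(adj P2)\<^sup>*\<^sup>* l2 w2" "l2 \<in> branch_leaves v w2"
  shows "leaf_path (branch_edges u v) (l1, l2, insert {v,w1} P1 \<union> insert {v,w2} P2)"
proof -
  note stubA = stub_through_fork[OF fork P1(1,2)]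
    and stubB = stub_through_fork[OF fork_swap[OF fork] P2(1,2)]
  let ?P = "insert {v,w1} P1 \<union> insert {v,w2} P2"
  have "(adj ?P)\<^sup>*\<^sup>* l1 v" "(adj ?P)\<^sup>*\<^sup>* l2 v"
    using adj_rtranclp_mono[OF _ stubA(2)] adj_rtranclp_mono[OF _ stubB(2)] by blast+
  hence "(adj ?P)\<^sup>*\<^sup>* l1 l2" using adj_rtranclp_sym rtranclp_trans by metis
  moreover have "l1 \<noteq> l2" using P1(3) P2(3) branch_leaves_fork(2)[OF fork nl] by blast
  ultimately show ?thesis
    unfolding leaf_path_def using P1(3) P2(3) branch_leaves_subset stubA(1) stubB(1) by auto
qed

lemma rooted_packing_join_stubs:
  assumes fork: "fork u v w1 w2" and nl: "v \<notin> leaves V E"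
    and stub1: "stubbed_packing v w1 y" and stub2: "stubbed_packing v w2 y2"
    and odd: "\<not> (even (card (branch_leaves v w1)) \<and> even (card (branch_leaves v w2)))"
  shows "rooted_packing u v y"
proof -
  define m1 where "m1 = card (branch_leaves v w1)"
  define m2 where "m2 = card (branch_leaves v w2)"
  have m: "card (branch_leaves u v) = m1 + m2"
    using branch_leaves_fork(3)[OF fork nl] unfolding m1_def m2_def .
  have m_pos: "m1 \<ge> 1" "m2 \<ge> 1"
    unfolding m1_def m2_def using card_branch_leaves_pos fork_edges[OF fork] by blast+
  obtain ps1 l1 P1 where S1: "leaf_packing (branch_edges v w1) ps1" "length ps1 = (m1 - 1) div 2"
    "P1 \<subseteq> branch_edges v w1" "(adj P1)\<^sup>*\<^sup>* l1 w1" "l1 \<in> branch_leaves v w1"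
    "\<forall>p\<in>set ps1. P1 \<inter> path_edges p = {}" "l1 = y \<or> ps1 \<noteq> [] \<and> path_src (hd ps1) = y"
    using stub1 unfolding stubbed_packing_def m1_def by blast
  obtain ps2 l2 P2 where S2: "leaf_packing (branch_edges v w2) ps2" "length ps2 = (m2 - 1) div 2"
    "P2 \<subseteq> branch_edges v w2" "(adj P2)\<^sup>*\<^sup>* l2 w2" "l2 \<in> branch_leaves v w2"
    "\<forall>p\<in>set ps2. P2 \<inter> path_edges p = {}"
    using stub2 unfolding stubbed_packing_def m2_def by blast
  note stubA = stub_through_fork[OF fork S1(3,4)]
    and stubB = stub_through_fork[OF fork_swap[OF fork] S2(3,4)]
  define P where "P = insert {v,w1} P1 \<union> insert {v,w2} P2"
  define np where "np = (l1, l2, P)"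
  have "leaf_path (branch_edges u v) np"
    unfolding np_def P_def using leaf_path_joining_stubs[OF fork nl S1(3-5) S2(3-5)] .
  moreover have "P \<inter> path_edges q = {}" if "q \<in> set (ps1 @ ps2)" for q
  proof (cases "q \<in> set ps1")
    case True
    thus ?thesis using stubA(3)[OF leaf_packing_edges[OF S1(1) True]] S1(6)
        stubB(4)[OF leaf_packing_edges[OF S1(1) True]] unfolding P_def by blast
  next
    case False
    hence q: "q \<in> set ps2" using that by simp
    thus ?thesis using stubB(3)[OF leaf_packing_edges[OF S2(1) q]] S2(6)
        stubA(4)[OF leaf_packing_edges[OF S2(1) q]] unfolding P_def by blast
  qed
  moreover have "leaf_packing (branch_edges u v) (ps1 @ ps2)"
    by (rule leaf_packing_fork_append[OF fork S1(1) S2(1)])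
  ultimately have packing: "leaf_packing (branch_edges u v) (np # ps1 @ ps2)"
    "leaf_packing (branch_edges u v) (ps1 @ np # ps2)"
    unfolding np_def by (auto simp: leaf_packing_Cons leaf_packing_append)
  have "(m1 - 1) div 2 + (m2 - 1) div 2 + 1 = (m1 + m2) div 2"
    by (rule div2_pred_add_div2_pred[OF odd[folded m1_def m2_def] m_pos])
  hence len: "length (np # ps1 @ ps2) = card (branch_leaves u v) div 2"
    "length (ps1 @ np # ps2) = card (branch_leaves u v) div 2"
    using S1(2) S2(2) m by simp_all
  show ?thesis
  proof (cases "l1 = y")
    case True thus ?thesis using packing(1) len(1) unfolding rooted_packing_def np_def by fastforce
  next
    case False
    hence "ps1 \<noteq> []" "path_src (hd ps1) = y" using S1(7) by auto
    thus ?thesis using packing(2) len(2) unfolding rooted_packing_def by fastforce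
  qed
qed

lemma rooted_packing_fork:
  assumes fork: "fork u v w1 w2" and nl: "v \<notin> leaves V E"
    and stub1: "stubbed_packing v w1 y"
    and rooted1: "even (card (branch_leaves v w1)) \<Longrightarrow> rooted_packing v w1 y"
    and stub2: "stubbed_packing v w2 y2"
    and half2: "leaf_packing (branch_edges v w2) qs2" "length qs2 = card (branch_leaves v w2) div 2"
  shows "rooted_packing u v y"
proof (cases "even (card (branch_leaves v w1)) \<and> even (card (branch_leaves v w2))")
  case True
  obtain qs1 where R1: "leaf_packing (branch_edges v w1) qs1"
    "length qs1 = card (branch_leaves v w1) div 2" "qs1 \<noteq> []" "path_src (hd qs1) = y"
    using rooted1 True unfolding rooted_packing_def by blast
  have "length (qs1 @ qs2) = card (branch_leaves u v) div 2"
    using R1(2) half2(2) branch_leaves_fork(3)[OF fork nl] div2_add_div2_even True by simp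
  thus ?thesis
    unfolding rooted_packing_def using leaf_packing_fork_append[OF fork R1(1) half2(1)] R1(3,4) by auto
next
  case False
  thus ?thesis by (rule rooted_packing_join_stubs[OF fork nl stub1 stub2])
qed

lemma card_branch_leaves_even_not_leaf:
  "{v,w} \<in> E \<Longrightarrow> even (card (branch_leaves v w)) \<Longrightarrow> w \<notin> leaves V E"
  using branch_leaves_leaf by fastforce

lemma branch_packings:
  "{u,v} \<in> E \<Longrightarrow> y \<in> branch_leaves u v \<Longrightarrow> stubbed_packing u v y \<and> (y \<noteq> v \<longrightarrow> rooted_packing u v y)"
proof (induction "card (branch u v)" arbitrary: u v y rule: less_induct)
  case less
  show ?case
  proof (cases "v \<in> leaves V E")
    case True
    hence leaves_uv: "branch_leaves u v = {v}" using branch_leaves_leaf less(2) by blast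
    hence "stubbed_packing u v v" unfolding stubbed_packing_def
      by (intro exI[of _ "[]"] exI[of _ v] exI[of _ "{}"]) simp
    thus ?thesis using less(3) leaves_uv by simp
  next
    case False
    have IH: "stubbed_packing v w y' \<and> (y' \<noteq> w \<longrightarrow> rooted_packing v w y')"
      if "fork u v w w'" "y' \<in> branch_leaves v w" for w w' y'
      using less(1)[OF card_branch_fork_less[OF that(1)]] fork_edges[OF that(1)] that(2) by blast
    have fork_case: "stubbed_packing u v y \<and> rooted_packing u v y"
      if fork: "fork u v w w'" and y: "y \<in> branch_leaves v w" for w w'
    proof -
      have ww': "{v,w} \<in> E" "{v,w'} \<in> E" using fork_edges[OF fork] by blast+
      obtain y2 where y2: "y2 \<in> branch_leaves v w'" using branch_leaves_nonempty ww'(2) by blast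
      have stub2: "stubbed_packing v w' y2" using IH[OF fork_swap[OF fork] y2] by blast
      obtain qs2 where half2: "leaf_packing (branch_edges v w') qs2"
        "length qs2 = card (branch_leaves v w') div 2"
      proof (cases "y2 = w'")
        case True
        hence "branch_leaves v w' = {w'}"
          using y2 branch_leaves_subset branch_leaves_leaf[OF ww'(2)] by blast
        thus ?thesis using that[of "[]"] by simp
      next
        case False
        thus ?thesis using that IH[OF fork_swap[OF fork] y2] unfolding rooted_packing_def by blast
      qed
      have "y \<noteq> w" if "even (card (branch_leaves v w))"
        using card_branch_leaves_even_not_leaf[OF ww'(1) that] y branch_leaves_subset by blast
      hence rooted1: "even (card (branch_leaves v w)) \<Longrightarrow> rooted_packing v w y" using IH[OF fork y] by blast
      have stub1: "stubbed_packing v w y" using IH[OF fork y] by blast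
      show ?thesis
        using stubbed_packing_fork[OF fork False stub1 rooted1 stub2 half2]
          rooted_packing_fork[OF fork False stub1 rooted1 stub2 half2] by blast
    qed
    obtain w1 w2 where fork: "fork u v w1 w2" using fork_exists less(2) False by blast
    have "y \<in> branch_leaves v w1 \<or> y \<in> branch_leaves v w2"
      using branch_leaves_fork(1)[OF fork False] less(3) by blast
    thus ?thesis using fork_case fork fork_swap[OF fork] by blast
  qed
qed

lemma leaves_subset_branch_leaves:
  assumes "{x,p} \<in> E" "x \<in> leaves V E" shows "leaves V E \<subseteq> insert x (branch_leaves x p)"
proof -
  have "{p,x} \<in> E" using assms(1) by (simp add: insert_commute)
  hence "branch p x = {x}" using branch_leaf assms(2) by blast
  hence "V = insert x (branch x p)" using V_eq_branch_Un[OF assms(1)] by simp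
  thus ?thesis unfolding branch_leaves_def leaves_def by blast
qed

lemma card_leaves_le_fork:
  assumes fork: "fork x p c w" and x: "x \<in> leaves V E" and p: "p \<notin> leaves V E"
  shows "card (leaves V E) \<le> 1 + card (branch_leaves p c) + card (branch_leaves p w)"
proof -
  have xp: "{x,p} \<in> E" using fork_edges[OF fork] by blast
  have "card (leaves V E) \<le> card (insert x (branch_leaves x p))"
    using leaves_subset_branch_leaves[OF xp x] finite_branch_leaves[OF xp] by (intro card_mono) auto
  also have "\<dots> \<le> 1 + card (branch_leaves p c) + card (branch_leaves p w)"
    using finite_branch_leaves[OF xp] branch_leaves_fork(3)[OF fork p] by (simp add: card_insert_if)
  finally show ?thesis .
qed

lemma leaf_packing_through_leaf_fork:
  assumes fork: "fork x p c w" and x: "x \<in> leaves V E" and p: "p \<notin> leaves V E"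
    and y: "y \<in> branch_leaves p w" "y \<noteq> w"
  shows "\<exists>ps. leaf_packing E ps \<and> (card (leaves V E) - 1) div 2 \<le> length ps \<and> 2 \<le> length ps
    \<and> path_src (ps!0) = x \<and> path_src (ps!1) = y"
proof -
  note edges = fork_edges[OF fork] and sub = branch_edges_fork[OF fork]
  obtain qs1 where R1: "leaf_packing (branch_edges p w) qs1" "length qs1 = card (branch_leaves p w) div 2"
    "qs1 \<noteq> []" "path_src (hd qs1) = y"
    using branch_packings[OF _ y(1)] edges y(2) unfolding rooted_packing_def by blast
  obtain z where "z \<in> branch_leaves p c" using branch_leaves_nonempty edges by blast
  then obtain ps2 l2 P2 where S2: "leaf_packing (branch_edges p c) ps2"
    "length ps2 = (card (branch_leaves p c) - 1) div 2" "P2 \<subseteq> branch_edges p c" "(adj P2)\<^sup>*\<^sup>* l2 c"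
    "l2 \<in> branch_leaves p c" "\<forall>q\<in>set ps2. P2 \<inter> path_edges q = {}"
    using branch_packings edges unfolding stubbed_packing_def by blast
  note stub = stub_through_fork[OF fork S2(3,4)]
  define np where "np = (x, l2, insert {x,p} (insert {p,c} P2))"
  have stub_np: "insert {p,c} P2 \<subseteq> path_edges np" unfolding np_def by (simp add: subset_insertI)
  have "(adj (path_edges np))\<^sup>*\<^sup>* p l2"
    using adj_rtranclp_sym[OF adj_rtranclp_mono[OF stub_np stub(2)]] .
  moreover have "adj (path_edges np) x p" unfolding np_def adj_def by simp
  ultimately have walk: "(adj (path_edges np))\<^sup>*\<^sup>* x l2" by (rule converse_rtranclp_into_rtranclp[rotated])
  have "x \<noteq> l2"
  proof -
    have "c \<noteq> x" using fork unfolding fork_def by blast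
    hence "branch p c \<subseteq> branch x p" using branch_subset_branch edges by blast
    thus ?thesis using S2(5) tail_notin_branch edges unfolding branch_leaves_def by blast
  qed
  moreover have "path_edges np \<subseteq> E"
    using order_trans[OF stub(1) branch_edges_subset] edges unfolding np_def by simp
  moreover have "l2 \<in> leaves V E" using S2(5) branch_leaves_subset by blast
  ultimately have "leaf_path E np" using x walk unfolding leaf_path_def np_def by simp
  moreover have "path_edges np \<inter> path_edges q = {}" if "q \<in> set (qs1 @ ps2)" for q
  proof -
    have x_tail: "{x,p} \<notin> branch_edges x p"
      using tail_notin_branch edges unfolding branch_edges_def by blast
    show ?thesis
    proof (cases "q \<in> set ps2")
      case True
      note q_edges = leaf_packing_edges[OF S2(1) True]
      have "{x,p} \<notin> path_edges q" using q_edges sub(1) x_tail by blast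
      thus ?thesis using stub(3)[OF q_edges] S2(6) True unfolding np_def by simp
    next
      case False
      hence q: "q \<in> set qs1" using that by simp
      note q_edges = leaf_packing_edges[OF R1(1) q]
      have "{x,p} \<notin> path_edges q" using q_edges sub(2) x_tail by blast
      thus ?thesis using stub(4)[OF q_edges] unfolding np_def by simp
    qed
  qed
  moreover have "leaf_packing E (qs1 @ ps2)"
    using leaf_packing_mono[OF branch_edges_subset leaf_packing_fork_append[OF fork_swap[OF fork] R1(1) S2(1)]] .
  ultimately have packing: "leaf_packing E (np # qs1 @ ps2)" by (simp add: leaf_packing_Cons)
  have "card (leaves V E) \<le> 1 + card (branch_leaves p c) + card (branch_leaves p w)"
    by (rule card_leaves_le_fork[OF fork x p])
  moreover have "card (branch_leaves p c) \<ge> 1" using card_branch_leaves_pos edges by blast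
  ultimately have "(card (leaves V E) - 1) div 2 \<le> length (np # qs1 @ ps2)"
    using R1(2) S2(2) by simp
  moreover have "2 \<le> length (np # qs1 @ ps2)" "path_src ((np # qs1 @ ps2) ! 1) = y"
    using R1(3,4) by (cases qs1; simp)+
  moreover have "path_src ((np # qs1 @ ps2) ! 0) = x" unfolding np_def by simp
  ultimately show ?thesis using packing by blast
qed

lemma leaf_packing_noncherry:
  assumes x: "x \<in> leaves V E" and y: "y \<in> leaves V E" and xy: "x \<noteq> y"
    and noncherry: "\<not> (\<exists>w\<in>V. {x,w} \<in> E \<and> {y,w} \<in> E)" and three: "card (leaves V E) \<ge> 3"
  shows "\<exists>ps. leaf_packing E ps \<and> (card (leaves V E) - 1) div 2 \<le> length ps \<and> 2 \<le> length ps
    \<and> path_src (ps!0) = x \<and> path_src (ps!1) = y"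
proof -
  have "x \<in> V" "y \<in> V" using x y by (auto simp: leaves_def)
  then obtain p where xp: "{x,p} \<in> E"
    using adj_rtranclp_edge_at_start[OF connected xy] by blast
  have p: "p \<notin> leaves V E"
  proof
    assume "p \<in> leaves V E"
    hence "leaves V E \<subseteq> {x,p}"
      using leaves_subset_branch_leaves[OF xp x] branch_leaves_leaf[OF xp] by simp
    hence "card (leaves V E) \<le> card {x,p}" by (intro card_mono) auto
    also have "\<dots> \<le> 2" by (simp add: card_insert_le_m1)
    finally show False using three by simp
  qed
  obtain c w where fork: "fork x p c w" using fork_exists[OF xp p] by blast
  have "y \<in> branch_leaves x p" using leaves_subset_branch_leaves[OF xp x] y xy by blast
  hence "y \<in> branch_leaves p c \<or> y \<in> branch_leaves p w"
    using branch_leaves_fork(1)[OF fork p] by blast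
  moreover have "y \<noteq> a" if "{p,a} \<in> E" for a
  proof
    assume "y = a"
    hence "{y,p} \<in> E" using that by (simp add: insert_commute)
    thus False using noncherry xp edgeD(2)[OF xp] by blast
  qed
  ultimately show ?thesis
    using leaf_packing_through_leaf_fork[OF fork x p] leaf_packing_through_leaf_fork[OF fork_swap[OF fork] x p]
      fork_edges[OF fork] by blast
qed

section \<open>Parsimony scores of leaf indicators\<close>

definition changed_edges :: "('v \<Rightarrow> bool) \<Rightarrow> 'v set set" where
  "changed_edges g = {e \<in> E. \<exists>u v. e = {u,v} \<and> g u \<noteq> g v}"

lemma changes_eq_card_changed_edges: "changes E g = card (changed_edges g)"
  by (simp add: changes_def changed_edges_def)

lemma finite_changed_edges: "finite (changed_edges g)"
  using finite_E by (simp add: changed_edges_def)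

lemma length_packing_le_card_changed_edges:
  "leaf_packing E ps \<Longrightarrow> \<forall>p\<in>set ps. g (path_src p) \<noteq> g (path_tgt p)
   \<Longrightarrow> length ps \<le> card (changed_edges g \<inter> \<Union> (path_edges ` set ps))"
proof (induction ps)
  case Nil thus ?case by simp
next
  case (Cons p ps)
  have p: "leaf_path E p" and ps: "leaf_packing E ps"
    and disj: "\<forall>q\<in>set ps. path_edges p \<inter> path_edges q = {}"
    using Cons(2) by (simp_all add: leaf_packing_Cons)
  obtain c d where cd: "{c,d} \<in> path_edges p" "g c \<noteq> g d"
    using adj_rtranclp_edge_changes[of "path_edges p" "path_src p" "path_tgt p" g] p Cons(3)
    unfolding leaf_path_def by auto
  have "{c,d} \<in> changed_edges g" using cd p unfolding leaf_path_def changed_edges_def by blast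
  hence "insert {c,d} (changed_edges g \<inter> \<Union> (path_edges ` set ps))
      \<subseteq> changed_edges g \<inter> \<Union> (path_edges ` set (p # ps))" using cd by auto
  hence "card (insert {c,d} (changed_edges g \<inter> \<Union> (path_edges ` set ps)))
      \<le> card (changed_edges g \<inter> \<Union> (path_edges ` set (p # ps)))"
    using finite_changed_edges by (intro card_mono) auto
  moreover have "{c,d} \<notin> \<Union> (path_edges ` set ps)" using disj cd by blast
  hence "card (insert {c,d} (changed_edges g \<inter> \<Union> (path_edges ` set ps)))
      = Suc (card (changed_edges g \<inter> \<Union> (path_edges ` set ps)))"
    using finite_changed_edges by (intro card_insert_disjoint) auto
  ultimately show ?case using Cons.IH[OF ps] Cons(3) by simp
qed

lemma length_packing_le_changes:
  assumes "leaf_packing E ps" "\<forall>p\<in>set ps. g (path_src p) \<noteq> g (path_tgt p)"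
  shows "length ps \<le> changes E g"
proof -
  have "card (changed_edges g \<inter> \<Union> (path_edges ` set ps)) \<le> card (changed_edges g)"
    using finite_changed_edges by (intro card_mono) auto
  thus ?thesis using length_packing_le_card_changed_edges[OF assms] changes_eq_card_changed_edges by simp
qed

lemma changes_leaf_indicator_le:
  assumes "Z \<subseteq> leaves V E" "finite Z" shows "changes E (\<lambda>v. v \<in> Z) \<le> card Z"
proof -
  have "changed_edges (\<lambda>v. v \<in> Z) \<subseteq> (\<Union>z\<in>Z. {e \<in> E. z \<in> e})"
    unfolding changed_edges_def by blast
  hence "card (changed_edges (\<lambda>v. v \<in> Z)) \<le> card (\<Union>z\<in>Z. {e \<in> E. z \<in> e})"
    using assms(2) finite_incident by (intro card_mono) auto
  also have "\<dots> \<le> (\<Sum>z\<in>Z. card {e \<in> E. z \<in> e})" by (rule card_UN_le[OF assms(2)])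
  also have "\<dots> \<le> (\<Sum>z\<in>Z. 1)" using assms(1) card_incident_leaf by (intro sum_mono) auto
  finally show ?thesis using changes_eq_card_changed_edges by simp
qed

text \<open>Flipping the cherry vertex \<open>w\<close> together with the leaves \<open>Z\<close> leaves both cherry edges unchanged.\<close>

lemma changes_cherry_indicator_less:
  assumes Z: "Z \<subseteq> leaves V E" "finite Z" and ab: "a \<in> Z" "b \<in> Z" "a \<noteq> b"
    and aw: "{a,w} \<in> E" and bw: "{b,w} \<in> E"
  shows "changes E (\<lambda>v. v \<in> insert w Z) < card Z"
proof -
  let ?Z = "insert w Z"
  let ?A = "\<Union>z\<in>Z - {a,b}. {e \<in> E. z \<in> e}" and ?B = "{e \<in> E. w \<in> e} - {{a,w},{b,w}}"
  have leaves_ab: "a \<in> leaves V E" "b \<in> leaves V E" using ab Z by auto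
  have "changed_edges (\<lambda>v. v \<in> ?Z) \<subseteq> ?A \<union> ?B"
  proof
    fix e assume "e \<in> changed_edges (\<lambda>v. v \<in> ?Z)"
    then obtain u' v' where e: "e \<in> E" "e = {u',v'}" "(u' \<in> ?Z) \<noteq> (v' \<in> ?Z)"
      unfolding changed_edges_def by blast
    obtain c d where cd: "e = {c,d}" "c \<in> ?Z" "d \<notin> ?Z"
    proof (cases "u' \<in> ?Z")
      case True thus ?thesis using that e by blast
    next
      case False thus ?thesis using that[of v' u'] e insert_commute[of u' v' "{}"] by simp
    qed
    have not_aw: "e \<noteq> {a,w}" "e \<noteq> {b,w}" using cd ab by (auto simp: doubleton_eq_iff)
    have "c \<noteq> a"
    proof
      assume "c = a"
      hence "e = {a,w}" using leaf_edge_unique[OF leaves_ab(1) e(1) aw] cd(1) by simp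
      thus False using not_aw by blast
    qed
    moreover have "c \<noteq> b"
    proof
      assume "c = b"
      hence "e = {b,w}" using leaf_edge_unique[OF leaves_ab(2) e(1) bw] cd(1) by simp
      thus False using not_aw by blast
    qed
    ultimately show "e \<in> ?A \<union> ?B" using cd not_aw e(1) by auto
  qed
  moreover have "finite ?A" "finite ?B" using Z(2) finite_incident by auto
  ultimately have "card (changed_edges (\<lambda>v. v \<in> ?Z)) \<le> card ?A + card ?B"
    by (meson card_Un_le card_mono finite_UnI order_trans)
  moreover have "card ?A \<le> card Z - 2"
  proof -
    have "card ?A \<le> (\<Sum>z\<in>Z - {a,b}. card {e \<in> E. z \<in> e})"
      using Z(2) by (intro card_UN_le) simp
    also have "\<dots> \<le> (\<Sum>z\<in>Z - {a,b}. 1)" using Z card_incident_leaf by (intro sum_mono) auto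
    also have "\<dots> = card Z - 2" using ab Z(2) by (simp add: card_Diff_subset)
    finally show ?thesis .
  qed
  moreover have "card ?B \<le> 1"
  proof -
    have "{a,w} \<noteq> {b,w}" using ab(3) by (auto simp: doubleton_eq_iff)
    hence "card {{a,w},{b,w}} = 2" by simp
    moreover have "{{a,w},{b,w}} \<subseteq> {e \<in> E. w \<in> e}" using aw bw by auto
    moreover have "card {e \<in> E. w \<in> e} \<le> 3" using degree_le_3 edgeD(2)[OF aw] by (simp add: degree_def)
    ultimately show ?thesis using finite_incident by (simp add: card_Diff_subset)
  qed
  moreover have "card {a,b} \<le> card Z" using ab Z(2) by (intro card_mono) auto
  hence "card Z \<ge> 2" using ab(3) by simp
  ultimately show ?thesis using changes_eq_card_changed_edges by simp
qed

lemma pscore_packing_sources: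
  assumes lab: "bij_betw lab X (leaves V E)" and ps: "leaf_packing E ps"
  shows "pscore X V E lab (restrict (\<lambda>z. lab z \<in> path_src ` set ps) X) = length ps"
proof (rule antisym)
  let ?S = "path_src ` set ps"
  note ends = leaf_packing_ends[OF ps]
  have S: "?S \<subseteq> leaves V E" using ends by blast
  have "pscore X V E lab (restrict (\<lambda>z. lab z \<in> ?S) X) \<le> changes E (\<lambda>v. v \<in> ?S)"
    by (rule pscore_le_changes[OF finite_E]) simp
  also have "\<dots> \<le> card ?S" using changes_leaf_indicator_le[OF S] by simp
  also have "\<dots> \<le> length ps" using card_image_le[of "set ps" path_src] card_length[of ps] by simp
  finally show "pscore X V E lab (restrict (\<lambda>z. lab z \<in> ?S) X) \<le> length ps" .
  show "length ps \<le> pscore X V E lab (restrict (\<lambda>z. lab z \<in> ?S) X)"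
  proof (rule pscore_geI[OF finite_E bij_betw_imp_inj_on[OF lab]])
    fix g assume g: "\<forall>z\<in>X. g (lab z) = restrict (\<lambda>z. lab z \<in> ?S) X z"
    have g_leaf: "g v \<longleftrightarrow> v \<in> ?S" if "v \<in> leaves V E" for v
    proof -
      have "v \<in> lab ` X" unfolding bij_betw_imp_surj_on[OF lab] by (rule that)
      then obtain z where "z \<in> X" "v = lab z" by blast
      thus ?thesis using g by simp
    qed
    have "g (path_src p) \<noteq> g (path_tgt p)" if p: "p \<in> set ps" for p
      using g_leaf ends[OF p] leaf_packing_sources(2)[OF ps p] p by simp
    thus "length ps \<le> changes E g" using length_packing_le_changes[OF ps, of g] by blast
  qed
qed

lemma card_packing_sources_preimage:
  assumes lab: "bij_betw lab X (leaves V E)" and ps: "leaf_packing E ps"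
  shows "card {z \<in> X. lab z \<in> path_src ` set ps} = length ps"
proof -
  let ?S = "path_src ` set ps"
  have sub: "?S \<subseteq> lab ` X"
    unfolding bij_betw_imp_surj_on[OF lab] using leaf_packing_ends[OF ps] by blast
  have image: "lab ` {z \<in> X. lab z \<in> ?S} = ?S"
  proof
    show "lab ` {z \<in> X. lab z \<in> ?S} \<subseteq> ?S" by blast
    show "?S \<subseteq> lab ` {z \<in> X. lab z \<in> ?S}"
    proof
      fix v assume v: "v \<in> ?S"
      then obtain z where "z \<in> X" "v = lab z" using sub by blast
      thus "v \<in> lab ` {z \<in> X. lab z \<in> ?S}" using v by blast
    qed
  qed
  have "inj_on lab {z \<in> X. lab z \<in> ?S}"
    by (rule inj_on_subset[OF bij_betw_imp_inj_on[OF lab]]) blast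
  hence "card {z \<in> X. lab z \<in> ?S} = card ?S" using card_image image by fastforce
  also have "\<dots> = length ps"
    using distinct_card[OF leaf_packing_sources(1)[OF ps]] by simp
  finally show ?thesis .
qed

lemma pscore_cherry_indicator_less:
  assumes lab: "bij_betw lab X (leaves V E)" and S: "S \<subseteq> X" "x \<in> S" "y \<in> S" "x \<noteq> y"
    and cherry: "cherry V E lab x y"
  shows "pscore X V E lab (restrict (\<lambda>z. z \<in> S) X) < card S"
proof -
  obtain w where w: "{lab x, w} \<in> E" "{lab y, w} \<in> E" using cherry unfolding cherry_def by blast
  have inj: "inj_on lab X" and im: "lab ` X = leaves V E" using lab by (auto simp: bij_betw_def)
  have "finite (leaves V E)" using finite_V by (simp add: leaves_def)
  hence "finite S" using S(1) bij_betw_finite[OF lab] finite_subset by blast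
  have lxy: "lab x \<noteq> lab y" using inj S by (auto dest: inj_onD)
  have "w \<notin> leaves V E"
  proof
    assume "w \<in> leaves V E"
    hence "{lab x, w} = {lab y, w}" using leaf_edge_unique[OF _ w(1) w(2)] by simp
    thus False using lxy by (auto simp: doubleton_eq_iff)
  qed
  hence "w \<notin> lab ` X" using im by simp
  hence "\<forall>z\<in>X. (lab z \<in> insert w (lab ` S)) = restrict (\<lambda>z. z \<in> S) X z"
    using inj S(1) by (auto dest: inj_onD)
  hence "pscore X V E lab (restrict (\<lambda>z. z \<in> S) X) \<le> changes E (\<lambda>v. v \<in> insert w (lab ` S))"
    by (rule pscore_le_changes[OF finite_E])
  also have "\<dots> < card (lab ` S)"
  proof (rule changes_cherry_indicator_less[OF _ _ _ _ lxy w])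
    show "lab ` S \<subseteq> leaves V E" using S(1) im by blast
    show "finite (lab ` S)" using \<open>finite S\<close> by simp
    show "lab x \<in> lab ` S" "lab y \<in> lab ` S" using S(2,3) by simp_all
  qed
  also have "\<dots> = card S" using card_image inj_on_subset[OF inj S(1)] by blast
  finally show ?thesis .
qed

lemma pscore_nonconstant_pos:
  assumes lab: "bij_betw lab X (leaves V E)" and ab: "a \<in> X" "b \<in> X" "f a \<noteq> f b"
  shows "1 \<le> pscore X V E lab f"
proof (rule pscore_geI[OF finite_E bij_betw_imp_inj_on[OF lab]])
  fix g assume g: "\<forall>z\<in>X. g (lab z) = f z"
  have "lab a \<in> V" "lab b \<in> V" using ab bij_betw_imp_surj_on[OF lab] by (auto simp: leaves_def)
  hence walk: "(adj E)\<^sup>*\<^sup>* (lab a) (lab b)" by (rule connected)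
  have "g (lab a) \<noteq> g (lab b)" using g ab by simp
  then obtain c d where "{c,d} \<in> E" "g c \<noteq> g d" using adj_rtranclp_edge_changes[OF walk, of g] by blast
  hence "{c,d} \<in> changed_edges g" unfolding changed_edges_def by blast
  hence "card (changed_edges g) \<noteq> 0" using finite_changed_edges by auto
  thus "1 \<le> changes E g" using changes_eq_card_changed_edges by simp
qed

lemma noncherry_character:
  assumes lab: "bij_betw lab X (leaves V E)" and xy: "x \<in> X" "y \<in> X" "x \<noteq> y"
    and noncherry: "\<not> cherry V E lab x y" and three: "card X \<ge> 3"
    and K: "2 \<le> K" "K \<le> max 2 ((card X - 1) div 2)"
  shows "\<exists>S\<subseteq>X. x \<in> S \<and> y \<in> S \<and> card S = K \<and> pscore X V E lab (restrict (\<lambda>z. z \<in> S) X) = K"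
proof -
  have "lab x \<in> leaves V E" "lab y \<in> leaves V E" "lab x \<noteq> lab y"
    using xy bij_betw_apply[OF lab] bij_betw_imp_inj_on[OF lab] by (auto dest: inj_onD)
  moreover have "card (leaves V E) = card X" using lab by (simp add: bij_betw_same_card)
  ultimately obtain ps where ps: "leaf_packing E ps" "(card X - 1) div 2 \<le> length ps"
    "2 \<le> length ps" "path_src (ps!0) = lab x" "path_src (ps!1) = lab y"
    using leaf_packing_noncherry noncherry three unfolding cherry_def by fastforce
  define qs where "qs = take K ps"
  define S where "S = {z \<in> X. lab z \<in> path_src ` set qs}"
  have "K \<le> length ps" using ps(2,3) K(2) by linarith
  hence qs: "leaf_packing E qs" "length qs = K"
    using leaf_packing_take[OF ps(1)] unfolding qs_def by simp_all
  have "qs!0 \<in> set qs" "qs!1 \<in> set qs" using qs(2) K(1) by simp_all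
  moreover have "path_src (qs!0) = lab x" "path_src (qs!1) = lab y"
    using ps(4,5) K(1) unfolding qs_def by simp_all
  ultimately have "lab x \<in> path_src ` set qs" "lab y \<in> path_src ` set qs" by (metis image_eqI)+
  hence "x \<in> S" "y \<in> S" using xy unfolding S_def by simp_all
  moreover have "card S = K"
    using card_packing_sources_preimage[OF lab qs(1)] qs(2) unfolding S_def by simp
  moreover have "restrict (\<lambda>z. z \<in> S) X = restrict (\<lambda>z. lab z \<in> path_src ` set qs) X"
    unfolding S_def by auto
  hence "pscore X V E lab (restrict (\<lambda>z. z \<in> S) X) = K"
    using pscore_packing_sources[OF lab qs(1)] qs(2) by simp
  moreover have "S \<subseteq> X" unfolding S_def by blast
  ultimately show ?thesis by blast
qed

end

lemma binary_phylo_tree_binary_tree: "binary_phylo_tree X V E lab \<Longrightarrow> binary_tree V E"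
  unfolding binary_phylo_tree_def phylo_tree_def binary_tree_def by blast

lemma cherry_transfer:
  fixes X :: "'x set" and V :: "'v set" and E :: "'v set set" and lab :: "'x \<Rightarrow> 'v"
    and V' :: "'w set" and E' :: "'w set set" and lab' :: "'x \<Rightarrow> 'w"
  assumes k: "k \<ge> 1" and T: "binary_phylo_tree X V E lab" and T': "binary_phylo_tree X V' E' lab'"
    and n: "card X \<ge> 2 * k + 1" and A: "Achar k X V E lab = Achar k X V' E' lab'"
    and xy: "x \<in> X" "y \<in> X" "x \<noteq> y" and cherry: "cherry V E lab x y"
  shows "cherry V' E' lab' x y"
proof (rule ccontr)
  assume noncherry: "\<not> cherry V' E' lab' x y"
  interpret T: binary_tree V E using binary_phylo_tree_binary_tree[OF T] .
  interpret T': binary_tree V' E' using binary_phylo_tree_binary_tree[OF T'] .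
  have lab: "bij_betw lab X (leaves V E)" and lab': "bij_betw lab' X (leaves V' E')"
    using T T' unfolding binary_phylo_tree_def phylo_tree_def by auto
  define K where "K = max k 2"
  have "2 \<le> K" "K \<le> max 2 ((card X - 1) div 2)" using n unfolding K_def by linarith+
  then obtain S where S: "S \<subseteq> X" "x \<in> S" "y \<in> S" "card S = K"
    and score': "pscore X V' E' lab' (restrict (\<lambda>z. z \<in> S) X) = K"
    using T'.noncherry_character[OF lab' xy noncherry] n k by auto
  define f where "f = restrict (\<lambda>z. z \<in> S) X"
  have f: "f \<in> X \<rightarrow>\<^sub>E (UNIV :: bool set)" unfolding f_def by simp
  have score: "pscore X V E lab f < K"
    using T.pscore_cherry_indicator_less[OF lab S(1-3) xy(3) cherry] S(4) unfolding f_def by simp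
  show False
  proof (cases "k \<ge> 2")
    case True
    hence "f \<in> Achar k X V' E' lab'" using f score' unfolding Achar_def K_def f_def by simp
    hence "f \<in> Achar k X V E lab" using A by simp
    thus False using score True unfolding Achar_def K_def by simp
  next
    case False
    hence k1: "k = 1" and K2: "K = 2" using k unfolding K_def by auto
    have "S \<noteq> X" using S(4) K2 n k1 by auto
    then obtain z where z: "z \<in> X" "z \<notin> S" using S(1) by blast
    have "f x \<noteq> f z" using z xy S(2) unfolding f_def by simp
    hence "pscore X V E lab f = 1" using T.pscore_nonconstant_pos[OF lab xy(1) z(1), of f] score K2 by simp
    hence "f \<in> Achar k X V E lab" using f k1 unfolding Achar_def by simp
    hence "f \<in> Achar k X V' E' lab'" using A by simp
    thus False using score' K2 k1 unfolding Achar_def f_def by simp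
  qed
qed

theorem proposition4:
  fixes X :: "'x set" and V :: "'v set" and E :: "'v set set" and lab :: "'x \<Rightarrow> 'v"
    and V' :: "'w set" and E' :: "'w set set" and lab' :: "'x \<Rightarrow> 'w"
    and k n :: nat and x y :: 'x
  assumes "k \<ge> 1"
    and "binary_phylo_tree X V E lab"
    and "binary_phylo_tree X V' E' lab'"
    and "card X = n" and "n \<ge> 2 * k + 1"
    and "Achar k X V E lab = Achar k X V' E' lab'"
    and "x \<in> X" and "y \<in> X" and "x \<noteq> y"
  shows "cherry V E lab x y \<longleftrightarrow> cherry V' E' lab' x y"
  using cherry_transfer[OF assms(1,2,3) _ assms(6-9)] cherry_transfer[OF assms(1,3,2) _ _ assms(7-9)]
    assms(4,5,6) by auto
end
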